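(* Let $L:\mathbb{R}^d\to\mathbb{R}^{\mathcal{Y}}_+$ be polyhedral and $\gamma:\Delta_{\mathcal{Y}}\rightrightarrows\mathcal{R}$ a finite property. If $L$ indirectly elicits $\gamma$, then there exists $\epsilon_0>0$ such that for all $0<\epsilon\le\epsilon_0$, the general $\epsilon$-thickened link construction for $L,\gamma,\epsilon,\|\cdot\|_\infty$ produces a link, i.e., the link envelope satisfies $\Psi(u)\neq\emptyset$ for all $u\in\mathbb{R}^d$.
   Context: $\mathcal{Y}$ is a finite label set, $\Delta_{\mathcal{Y}}$ the simplex, $\mathbb{R}^{\mathcal{Y}}_+$ the nonnegative orthant. A property $\gamma:\Delta_{\mathcal{Y}}\rightrightarrows\mathcal{R}$ maps each $p$ to a nonempty subset of $\mathcal{R}$; finite if $\mathcal{R}$ finite; level sets $\gamma_r=\{p:r\in\gamma(p)\}$. $L$ polyhedral: each coordinate $u\mapsto L(u)_y$ is a max of finitely many affine functions; it elicits $\Gamma(p)=\arg\min_u\langle p,L(u)\rangle$. $L$ indirectly elicits $\gamma$ if for all $u$ there is $r$ with $\Gamma_u\subseteq\gamma_r$. General construction for $L,\gamma,\epsilon,\|\cdot\|$: $\mathcal{U}=\{\Gamma(p):p\in\Delta_{\mathcal{Y}}\}$, $\Gamma_U=\{p:\Gamma(p)=U\}$, $R_U=\{r\in\mathcal{R}:\Gamma_U\subseteq\gamma_r\}$; initialize $\Psi(u)=\mathcal{R}$; for each $U\in\mathcal{U}$ and each $u$ with $\inf_{u^*\in U}\|u^*-u\|<\epsilon$ set $\Psi(u)\leftarrow\Psi(u)\cap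 R_U$; the construction produces a link if $\Psi(u)\neq\emptyset$ for all $u$, and the links produced are the $\psi$ with $\psi(u)\in\Psi(u)$ for all $u$. *)

theory Defs
  imports "HOL-Analysis.Analysis"
begin

definition prob_simplex :: "('y::finite \<Rightarrow> real) set" where
  "prob_simplex = {p. (\<forall>y. 0 \<le> p y) \<and> (\<Sum>y\<in>UNIV. p y) = 1}"

definition is_property :: "(('y::finite \<Rightarrow> real) \<Rightarrow> 'r set) \<Rightarrow> bool" where
  "is_property \<gamma> \<longleftrightarrow> (\<forall>p\<in>prob_simplex. \<gamma> p \<noteq> {})"

definition finite_property :: "(('y::finite \<Rightarrow> real) \<Rightarrow> 'r set) \<Rightarrow> bool" where
  "finite_property \<gamma> \<longleftrightarrow> is_property \<gamma> \<and> finite (UNIV :: 'r set)"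

definition level_set :: "(('y::finite \<Rightarrow> real) \<Rightarrow> 'r set) \<Rightarrow> 'r \<Rightarrow> ('y \<Rightarrow> real) set" where
  "level_set \<gamma> r = {p\<in>prob_simplex. r \<in> \<gamma> p}"

definition polyhedral_loss :: "(real^'d \<Rightarrow> 'y \<Rightarrow> real) \<Rightarrow> bool" where
  "polyhedral_loss L \<longleftrightarrow>
     (\<forall>u y. 0 \<le> L u y) \<and>
     (\<forall>y. \<exists>A :: ((real^'d) \<times> real) set. finite A \<and> A \<noteq> {} \<and>
           (\<forall>u. L u y = Max ((\<lambda>(a, b). a \<bullet> u + b) ` A)))"

definition exp_loss :: "(real^'d \<Rightarrow> 'y::finite \<Rightarrow> real) \<Rightarrow> ('y \<Rightarrow> real) \<Rightarrow> real^'d \<Rightarrow> real" where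
  "exp_loss L p u = (\<Sum>y\<in>UNIV. p y * L u y)"

definition elicited :: "(real^'d \<Rightarrow> 'y::finite \<Rightarrow> real) \<Rightarrow> ('y \<Rightarrow> real) \<Rightarrow> (real^'d) set" where
  "elicited L p = {u. \<forall>u'. exp_loss L p u \<le> exp_loss L p u'}"

definition elicited_level :: "(real^'d \<Rightarrow> 'y::finite \<Rightarrow> real) \<Rightarrow> real^'d \<Rightarrow> ('y \<Rightarrow> real) set" where
  "elicited_level L u = {p\<in>prob_simplex. u \<in> elicited L p}"

definition indirectly_elicits :: "(real^'d \<Rightarrow> 'y::finite \<Rightarrow> real) \<Rightarrow> (('y \<Rightarrow> real) \<Rightarrow> 'r set) \<Rightarrow> bool" where
  "indirectly_elicits L \<gamma> \<longleftrightarrow> (\<forall>u. \<exists>r. elicited_level L u \<subseteq> level_set \<gamma> r)"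

definition opt_sets :: "(real^'d \<Rightarrow> 'y::finite \<Rightarrow> real) \<Rightarrow> (real^'d) set set" where
  "opt_sets L = {elicited L p | p. p \<in> prob_simplex}"

definition cell :: "(real^'d \<Rightarrow> 'y::finite \<Rightarrow> real) \<Rightarrow> (real^'d) set \<Rightarrow> ('y \<Rightarrow> real) set" where
  "cell L U = {p\<in>prob_simplex. elicited L p = U}"

definition reports_for :: "(real^'d \<Rightarrow> 'y::finite \<Rightarrow> real) \<Rightarrow> (('y \<Rightarrow> real) \<Rightarrow> 'r set) \<Rightarrow> (real^'d) set \<Rightarrow> 'r set" where
  "reports_for L \<gamma> U = {r. cell L U \<subseteq> level_set \<gamma> r}"

(* Link envelope Psi(u) of the epsilon-thickened construction w.r.t. the sup norm;
   inf_{u* in U} ||u* - u||_inf < eps  is unfolded as  EX u* in U. ||u* - u||_inf < eps *)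
definition link_envelope ::
  "(real^'d \<Rightarrow> 'y::finite \<Rightarrow> real) \<Rightarrow> (('y \<Rightarrow> real) \<Rightarrow> 'r set) \<Rightarrow> real \<Rightarrow> real^'d \<Rightarrow> 'r set" where
  "link_envelope L \<gamma> \<epsilon> u =
     {r. \<forall>U\<in>opt_sets L. (\<exists>us\<in>U. infnorm (us - u) < \<epsilon>) \<longrightarrow> r \<in> reports_for L \<gamma> U}"

end

theory Submission
  imports Defs
begin

text \<open>Each coordinate of \<open>L\<close> is a maximum of finitely many affine pieces, hence so is the
  expected loss, and every optimal set \<open>\<Gamma>(p)\<close> is a polyhedron. Moreover \<open>\<Gamma>(p)\<close> is a union of
  classes of points with the same active pieces, so there are only finitely many optimal sets.
  If finitely many polyhedra have empty intersection, Farkas' lemma gives a uniform margin by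
  which every point violates one of their inequalities, so for some \<open>\<delta> > 0\<close> no point is
  \<open>\<delta>\<close>-close to all of them. With \<open>\<epsilon>\<^sub>0\<close> below all these \<open>\<delta>\<close>, the optimal sets coming
  \<open>\<epsilon>\<close>-close to \<open>u\<close> share a point \<open>w\<close>, and the report \<open>r\<close> with \<open>\<Gamma>\<^sub>w \<subseteq> \<gamma>\<^sub>r\<close> provided by
  indirect elicitation lies in \<open>\<Psi>(u)\<close>.\<close>

definition max_affine :: "('a::real_inner \<times> real) set \<Rightarrow> 'a \<Rightarrow> real" where
  "max_affine A u = Max ((\<lambda>(a, b). a \<bullet> u + b) ` A)"

definition active_pieces :: "('a::real_inner \<times> real) set \<Rightarrow> 'a \<Rightarrow> ('a \<times> real) set" where
  "active_pieces A u = {(a, b) \<in> A. a \<bullet> u + b = max_affine A u}"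

definition inequality_set :: "('a::real_inner \<times> real) set \<Rightarrow> 'a set" where
  "inequality_set C = {u. \<forall>(a, b) \<in> C. a \<bullet> u \<le> b}"

lemma max_affine_ge:
  assumes "finite A" and "(a, b) \<in> A"
  shows "a \<bullet> u + b \<le> max_affine A u"
  unfolding max_affine_def using assms by (intro Max_ge) force+

lemma max_affine_le_iff:
  assumes "finite A" and "A \<noteq> {}"
  shows "max_affine A u \<le> m \<longleftrightarrow> (\<forall>(a, b) \<in> A. a \<bullet> u + b \<le> m)"
  unfolding max_affine_def using assms by (auto simp: Max_le_iff)

lemma active_pieces_nonempty:
  assumes "finite A" and "A \<noteq> {}"
  shows "active_pieces A u \<noteq> {}"
proof -
  have "max_affine A u \<in> (\<lambda>(a, b). a \<bullet> u + b) ` A"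
    unfolding max_affine_def using assms by (intro Max_in) auto
  then show ?thesis unfolding active_pieces_def by force
qed

lemma max_affine_affine_near:
  assumes "finite A" and "A \<noteq> {}" and same: "active_pieces A u' = active_pieces A u"
  shows "\<forall>\<^sub>F t in at 0. max_affine A (u + t *\<^sub>R (u' - u))
                        = (1 - t) * max_affine A u + t * max_affine A u'"
proof -
  let ?w = "\<lambda>t. u + t *\<^sub>R (u' - u)"
  let ?M = "\<lambda>t. (1 - t) * max_affine A u + t * max_affine A u'"
  have on_line: "a \<bullet> ?w t + b = (1 - t) * (a \<bullet> u + b) + t * (a \<bullet> u' + b)" for a b t
    by (simp add: inner_add_right inner_diff_right algebra_simps)
  have active_on_line: "a \<bullet> ?w t + b = ?M t" if "(a, b) \<in> active_pieces A u" for a b t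
    using that same on_line[of a t b] unfolding active_pieces_def by (metis (lifting) case_prodD mem_Collect_eq)
  have below: "\<forall>\<^sub>F t in at 0. a \<bullet> ?w t + b \<le> ?M t" if ab: "(a, b) \<in> A" for a b
  proof (cases "(a, b) \<in> active_pieces A u")
    case True
    then show ?thesis using active_on_line by simp
  next
    case False
    then have "0 < max_affine A u - (a \<bullet> u + b)"
      using max_affine_ge[OF \<open>finite A\<close> ab, of u] ab unfolding active_pieces_def by auto
    moreover have "((\<lambda>t. ?M t - (a \<bullet> ?w t + b)) \<longlongrightarrow> max_affine A u - (a \<bullet> u + b)) (at 0)"
      unfolding on_line by (auto intro!: tendsto_eq_intros)
    ultimately have "\<forall>\<^sub>F t in at 0. 0 < ?M t - (a \<bullet> ?w t + b)"
      by (rule order_tendstoD(1)[rotated])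
    then show ?thesis by eventually_elim simp
  qed
  obtain a0 b0 where active0: "(a0, b0) \<in> active_pieces A u"
    using active_pieces_nonempty[OF assms(1,2), of u] by fast
  have "\<forall>\<^sub>F t in at 0. \<forall>(a, b) \<in> A. a \<bullet> ?w t + b \<le> ?M t"
    using below by (intro eventually_ball_finite \<open>finite A\<close>) auto
  then show ?thesis
  proof eventually_elim
    case (elim t)
    have "a0 \<bullet> ?w t + b0 \<le> max_affine A (?w t)"
      using active0 max_affine_ge[OF \<open>finite A\<close>] unfolding active_pieces_def by blast
    then show ?case
      using elim active_on_line[OF active0, of t] max_affine_le_iff[OF assms(1,2)] by (simp add: antisym)
  qed
qed

lemma farkas_certificate:
  fixes C :: "('a::euclidean_space \<times> real) set"
  assumes "finite C" and infeasible: "inequality_set C = {}"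
  shows "(0, -1) \<in> convex_cone hull C"
proof (rule ccontr)
  let ?K = "convex_cone hull C"
  assume "(0, -1) \<notin> ?K"
  then obtain z c where sep_point: "z \<bullet> (0, -1) < c" and sep_cone: "\<And>x. x \<in> ?K \<Longrightarrow> c < z \<bullet> x"
    using separating_hyperplane_closed_point[OF convex_convex_cone_hull closed_convex_cone_hull[OF \<open>finite C\<close>]]
    by blast
  have "c < 0"
    using sep_cone[OF convex_cone_hull_contains_0] by simp
  obtain w s where z: "z = (w, s)" by (cases z)
  have "0 < s" using sep_point \<open>c < 0\<close> z by simp
  have dual_nonneg: "0 \<le> z \<bullet> x" if "x \<in> C" for x
  proof (rule ccontr)
    assume "\<not> 0 \<le> z \<bullet> x"
    then have "z \<bullet> x < 0" by simp
    then have "(c / (z \<bullet> x)) *\<^sub>R x \<in> ?K"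
      using \<open>c < 0\<close> \<open>x \<in> C\<close> by (intro convex_cone_hull_mul hull_inc) (auto simp: divide_nonpos_neg)
    then have "c < z \<bullet> ((c / (z \<bullet> x)) *\<^sub>R x)" by (rule sep_cone)
    with \<open>z \<bullet> x < 0\<close> show False by simp
  qed
  have "- (1 / s) *\<^sub>R w \<in> inequality_set C"
    unfolding inequality_set_def
  proof clarify
    fix a b assume "(a, b) \<in> C"
    then have "0 \<le> w \<bullet> a + s * b" using dual_nonneg z by force
    with \<open>0 < s\<close> show "a \<bullet> (- (1 / s) *\<^sub>R w) \<le> b"
      by (simp add: inner_commute field_simps)
  qed
  with infeasible show False by simp
qed

lemma infeasible_uniform_margin:
  fixes C :: "('a::euclidean_space \<times> real) set"
  assumes "finite C" and "inequality_set C = {}"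
  shows "\<exists>m>0. \<forall>u. \<exists>(a, b) \<in> C. m \<le> a \<bullet> u - b"
proof -
  have "C \<noteq> {}" using assms(2) by (auto simp: inequality_set_def)
  then obtain c x where "x \<in> convex hull C" "0 \<le> c" and certificate: "(0, -1) = c *\<^sub>R x"
    using farkas_certificate[OF assms] convex_cone_hull_convex_hull_nonempty by blast
  then have "c \<noteq> 0" by (auto simp: zero_prod_def)
  with \<open>0 \<le> c\<close> have "0 < c" by simp
  have "\<exists>(a, b) \<in> C. 1 / c \<le> a \<bullet> u - b" for u
  proof (rule ccontr)
    assume "\<not> ?thesis"
    then have "C \<subseteq> {z. (u, -1) \<bullet> z < 1 / c}" by (auto simp: inner_commute)
    then have "convex hull C \<subseteq> {z. (u, -1) \<bullet> z < 1 / c}"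
      by (simp add: convex_halfspace_lt hull_minimal)
    with \<open>x \<in> convex hull C\<close> have "(u, -1) \<bullet> x < 1 / c" by blast
    moreover have "x = (1 / c) *\<^sub>R (0, -1)" using certificate \<open>c \<noteq> 0\<close> by simp
    ultimately show False by simp
  qed
  with \<open>0 < c\<close> show ?thesis by (intro exI[of _ "1 / c"]) auto
qed

lemma polyhedra_empty_Inter_apart:
  fixes \<U> :: "'a::euclidean_space set set"
  assumes "finite \<U>" and polyhedral: "\<And>U. U \<in> \<U> \<Longrightarrow> \<exists>C. finite C \<and> U = inequality_set C"
    and "\<Inter>\<U> = {}"
  shows "\<exists>\<delta>>0. \<forall>u. \<exists>U \<in> \<U>. \<forall>v \<in> U. \<delta> \<le> infnorm (v - u)"
proof -
  obtain C where finite_C: "\<And>U. U \<in> \<U> \<Longrightarrow> finite (C U)"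
    and U_eq: "\<And>U. U \<in> \<U> \<Longrightarrow> U = inequality_set (C U)"
    using polyhedral by metis
  define D where "D = (\<Union>U \<in> \<U>. C U)"
  have "finite D" unfolding D_def using \<open>finite \<U>\<close> finite_C by blast
  have "inequality_set D \<subseteq> \<Inter>\<U>"
    using U_eq unfolding D_def inequality_set_def by blast
  with \<open>\<Inter>\<U> = {}\<close> obtain m where "0 < m" and margin: "\<And>u. \<exists>(a, b) \<in> D. m \<le> a \<bullet> u - b"
    using infeasible_uniform_margin[OF \<open>finite D\<close>] by blast
  define K where "K = Max (insert 0 ((\<lambda>(a, b). norm a) ` D))"
  have "0 \<le> K" unfolding K_def using \<open>finite D\<close> by simp
  have norm_le_K: "norm a \<le> K" if "(a, b) \<in> D" for a b
    unfolding K_def using \<open>finite D\<close> that by (intro Max_ge) force+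
  define P where "P = K * sqrt DIM('a) + 1"
  have "0 < P" unfolding P_def using \<open>0 \<le> K\<close> by (intro add_nonneg_pos mult_nonneg_nonneg) auto
  have "\<exists>U \<in> \<U>. \<forall>v \<in> U. m / P \<le> infnorm (v - u)" for u
  proof -
    obtain a b where "(a, b) \<in> D" and "m \<le> a \<bullet> u - b" using margin by blast
    then obtain U where "U \<in> \<U>" and "(a, b) \<in> C U" unfolding D_def by blast
    have "m / P \<le> infnorm (v - u)" if "v \<in> U" for v
    proof -
      have "a \<bullet> v \<le> b" using U_eq[OF \<open>U \<in> \<U>\<close>] \<open>(a, b) \<in> C U\<close> \<open>v \<in> U\<close>
        unfolding inequality_set_def by blast
      with \<open>m \<le> a \<bullet> u - b\<close> have "m \<le> a \<bullet> (u - v)" by (simp add: inner_diff_right)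
      also have "\<dots> \<le> norm a * norm (v - u)" by (metis norm_cauchy_schwarz norm_minus_commute)
      also have "\<dots> \<le> K * (sqrt DIM('a) * infnorm (v - u))"
        using norm_le_K[OF \<open>(a, b) \<in> D\<close>] \<open>0 \<le> K\<close> by (intro mult_mono norm_le_infnorm) auto
      also have "\<dots> \<le> P * infnorm (v - u)"
        unfolding P_def by (simp add: algebra_simps infnorm_pos_le)
      finally show ?thesis using \<open>0 < P\<close> by (simp add: pos_divide_le_eq mult.commute)
    qed
    with \<open>U \<in> \<U>\<close> show ?thesis by blast
  qed
  with \<open>0 < m\<close> \<open>0 < P\<close> show ?thesis by (intro exI[of _ "m / P"]) auto
qed

lemma finite_polyhedra_common_point_nearby:
  fixes \<S> :: "'a::euclidean_space set set"
  assumes "finite \<S>" and polyhedral: "\<And>U. U \<in> \<S> \<Longrightarrow> \<exists>C. finite C \<and> U = inequality_set C"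
  shows "\<exists>\<epsilon>0>0. \<forall>u. \<exists>w. \<forall>U \<in> \<S>. (\<exists>v \<in> U. infnorm (v - u) < \<epsilon>0) \<longrightarrow> w \<in> U"
proof -
  define Bad where "Bad = {\<U>. \<U> \<subseteq> \<S> \<and> \<Inter>\<U> = {}}"
  have "finite Bad" unfolding Bad_def using \<open>finite \<S>\<close> by simp
  have "\<forall>\<U> \<in> Bad. \<exists>\<delta>>0. \<forall>u. \<exists>U \<in> \<U>. \<forall>v \<in> U. \<delta> \<le> infnorm (v - u)"
  proof
    fix \<U> assume "\<U> \<in> Bad"
    then have "\<U> \<subseteq> \<S>" and "\<Inter>\<U> = {}" unfolding Bad_def by auto
    then show "\<exists>\<delta>>0. \<forall>u. \<exists>U \<in> \<U>. \<forall>v \<in> U. \<delta> \<le> infnorm (v - u)"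
      using \<open>finite \<S>\<close> polyhedral by (intro polyhedra_empty_Inter_apart) (auto intro: finite_subset)
  qed
  then obtain \<delta> where \<delta>_pos: "\<And>\<U>. \<U> \<in> Bad \<Longrightarrow> 0 < \<delta> \<U>"
    and apart: "\<And>\<U> u. \<U> \<in> Bad \<Longrightarrow> \<exists>U \<in> \<U>. \<forall>v \<in> U. \<delta> \<U> \<le> infnorm (v - u)"
    by metis
  define \<epsilon>0 where "\<epsilon>0 = Min (insert 1 (\<delta> ` Bad))"
  have "0 < \<epsilon>0" unfolding \<epsilon>0_def using \<open>finite Bad\<close> \<delta>_pos by simp
  have \<epsilon>0_le: "\<epsilon>0 \<le> \<delta> \<U>" if "\<U> \<in> Bad" for \<U>
    unfolding \<epsilon>0_def using \<open>finite Bad\<close> that by simp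
  have "\<Inter>{U \<in> \<S>. \<exists>v \<in> U. infnorm (v - u) < \<epsilon>0} \<noteq> {}" for u
  proof
    let ?near = "{U \<in> \<S>. \<exists>v \<in> U. infnorm (v - u) < \<epsilon>0}"
    assume "\<Inter>?near = {}"
    then have "?near \<in> Bad" unfolding Bad_def by blast
    then obtain U where "U \<in> ?near" and far: "\<forall>v \<in> U. \<delta> ?near \<le> infnorm (v - u)"
      using apart by blast
    then obtain v where "v \<in> U" and "infnorm (v - u) < \<epsilon>0" by blast
    with far \<epsilon>0_le[OF \<open>?near \<in> Bad\<close>] show False by fastforce
  qed
  with \<open>0 < \<epsilon>0\<close> show ?thesis by blast
qed

lemma finite_saturated_sets:
  assumes "finite (range f)"
  shows "finite {U. \<forall>u \<in> U. \<forall>v. f v = f u \<longrightarrow> v \<in> U}"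
proof -
  have "{U. \<forall>u \<in> U. \<forall>v. f v = f u \<longrightarrow> v \<in> U} \<subseteq> (\<lambda>S. f -` S) ` Pow (range f)"
  proof
    fix U assume "U \<in> {U. \<forall>u \<in> U. \<forall>v. f v = f u \<longrightarrow> v \<in> U}"
    then have "U = f -` (f ` U)" by auto
    then show "U \<in> (\<lambda>S. f -` S) ` Pow (range f)" by blast
  qed
  with assms show ?thesis by (meson finite_Pow_iff finite_imageI finite_subset)
qed

locale max_affine_loss =
  fixes L :: "real^'d \<Rightarrow> 'y::finite \<Rightarrow> real"
    and A :: "'y \<Rightarrow> ((real^'d) \<times> real) set"
  assumes finite_pieces: "finite (A y)"
    and pieces_nonempty: "A y \<noteq> {}"
    and loss_eq: "L u y = max_affine (A y) u"
begin

lemma exp_loss_affine_near: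
  assumes "\<And>y. active_pieces (A y) u' = active_pieces (A y) u"
  shows "\<forall>\<^sub>F t in at 0. exp_loss L p (u + t *\<^sub>R (u' - u))
                        = (1 - t) * exp_loss L p u + t * exp_loss L p u'"
proof -
  have "\<forall>\<^sub>F t in at 0. \<forall>y. L (u + t *\<^sub>R (u' - u)) y = (1 - t) * L u y + t * L u' y"
    unfolding loss_eq using finite_pieces pieces_nonempty assms
    by (intro eventually_all_finite max_affine_affine_near)
  then show ?thesis
  proof eventually_elim
    case (elim t)
    then have "exp_loss L p (u + t *\<^sub>R (u' - u)) = (\<Sum>y\<in>UNIV. p y * ((1 - t) * L u y + t * L u' y))"
      by (simp add: exp_loss_def)
    also have "\<dots> = (1 - t) * exp_loss L p u + t * exp_loss L p u'"
      by (simp add: exp_loss_def distrib_left sum.distrib sum_distrib_left mult.left_commute)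
    finally show ?case .
  qed
qed

text \<open>Moving from \<open>u\<close> slightly away from \<open>u'\<close> keeps the expected loss affine on the line,
  so minimality of \<open>u\<close> forces the expected loss at \<open>u'\<close> not to exceed the one at \<open>u\<close>.\<close>

lemma elicited_respects_active_pieces:
  assumes opt: "u \<in> elicited L p" and same: "\<And>y. active_pieces (A y) u' = active_pieces (A y) u"
  shows "u' \<in> elicited L p"
proof -
  let ?E = "exp_loss L p"
  obtain d where "0 < d" and near: "\<And>t. t \<noteq> 0 \<Longrightarrow> dist t 0 < d \<Longrightarrow>
      ?E (u + t *\<^sub>R (u' - u)) = (1 - t) * ?E u + t * ?E u'"
    using exp_loss_affine_near[OF same, of p] unfolding eventually_at by auto
  define t where "t = - d / 2"
  have "t < 0" and "?E (u + t *\<^sub>R (u' - u)) = ?E u + t * (?E u' - ?E u)"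
    using \<open>0 < d\<close> near[of t] unfolding t_def by (auto simp: algebra_simps)
  moreover have "?E u \<le> ?E (u + t *\<^sub>R (u' - u))" using opt unfolding elicited_def by blast
  ultimately have "?E u' \<le> ?E u" by (auto simp: zero_le_mult_iff)
  with opt show ?thesis unfolding elicited_def by (auto intro: order_trans)
qed

lemma finite_opt_sets: "finite (opt_sets L)"
proof -
  let ?active = "\<lambda>u y. active_pieces (A y) u"
  have "range ?active \<subseteq> Pi\<^sub>E UNIV (\<lambda>y. Pow (A y))"
    by (auto simp: active_pieces_def PiE_UNIV_domain)
  then have "finite (range ?active)"
    by (rule finite_subset) (simp add: finite_PiE finite_pieces)
  moreover have "opt_sets L \<subseteq> {U. \<forall>u \<in> U. \<forall>v. ?active v = ?active u \<longrightarrow> v \<in> U}"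
  proof (intro subsetI CollectI ballI allI impI)
    fix U u v assume "U \<in> opt_sets L" "u \<in> U" and same: "?active v = ?active u"
    then obtain p where U: "U = elicited L p" by (auto simp: opt_sets_def)
    have "\<And>y. active_pieces (A y) v = active_pieces (A y) u" using same by (simp add: fun_eq_iff)
    with \<open>u \<in> U\<close> show "v \<in> U" unfolding U by (rule elicited_respects_active_pieces)
  qed
  ultimately show ?thesis using finite_saturated_sets finite_subset by blast
qed

lemma exp_loss_max_affine:
  assumes nonneg: "\<And>y. 0 \<le> p y"
  shows "\<exists>B. finite B \<and> B \<noteq> {} \<and> (\<forall>u. exp_loss L p u = max_affine B u)"
proof -
  define mix :: "('y \<Rightarrow> (real^'d) \<times> real) \<Rightarrow> (real^'d) \<times> real" where
    "mix s = (\<Sum>y\<in>UNIV. p y *\<^sub>R fst (s y), \<Sum>y\<in>UNIV. p y * snd (s y))" for s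
  have mix_value: "fst (mix s) \<bullet> u + snd (mix s) = (\<Sum>y\<in>UNIV. p y * (fst (s y) \<bullet> u + snd (s y)))" for s u
    by (simp add: mix_def inner_sum_left distrib_left sum.distrib)
  define B where "B = mix ` Pi\<^sub>E UNIV A"
  have "finite B" unfolding B_def using finite_pieces by (simp add: finite_PiE)
  moreover have "B \<noteq> {}" unfolding B_def using pieces_nonempty by (simp add: PiE_eq_empty_iff)
  moreover have "exp_loss L p u = max_affine B u" for u
  proof (rule antisym)
    have "\<forall>y. \<exists>z. z \<in> active_pieces (A y) u"
      using active_pieces_nonempty[OF finite_pieces pieces_nonempty] by blast
    then obtain s where active: "\<And>y. s y \<in> active_pieces (A y) u" by metis
    have "s y \<in> A y" and "fst (s y) \<bullet> u + snd (s y) = L u y" for y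
      using active[of y] unfolding active_pieces_def loss_eq by (cases "s y"; simp)+
    then have "s \<in> Pi\<^sub>E UNIV A" by (simp add: PiE_UNIV_domain)
    have "exp_loss L p u = fst (mix s) \<bullet> u + snd (mix s)"
      by (simp add: mix_value exp_loss_def \<open>\<And>y. fst (s y) \<bullet> u + snd (s y) = L u y\<close>)
    also have "\<dots> \<le> max_affine B u"
      using \<open>s \<in> Pi\<^sub>E UNIV A\<close> \<open>finite B\<close> by (intro max_affine_ge) (auto simp: B_def)
    finally show "exp_loss L p u \<le> max_affine B u" .
    have "fst (mix s) \<bullet> u + snd (mix s) \<le> exp_loss L p u" if "s \<in> Pi\<^sub>E UNIV A" for s
      unfolding mix_value exp_loss_def loss_eq
      using that finite_pieces nonneg by (intro sum_mono mult_left_mono max_affine_ge) (auto simp: PiE_UNIV_domain)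
    then have "\<forall>(a, b) \<in> B. a \<bullet> u + b \<le> exp_loss L p u"
      unfolding B_def by (simp add: case_prod_beta)
    then show "max_affine B u \<le> exp_loss L p u"
      by (simp add: max_affine_le_iff[OF \<open>finite B\<close> \<open>B \<noteq> {}\<close>])
  qed
  ultimately show ?thesis by blast
qed

lemma opt_sets_polyhedral:
  assumes "U \<in> opt_sets L"
  shows "\<exists>C. finite C \<and> U = inequality_set C"
proof -
  obtain p where "p \<in> prob_simplex" and U: "U = elicited L p"
    using assms unfolding opt_sets_def by blast
  then obtain B where "finite B" "B \<noteq> {}" and E: "\<And>u. exp_loss L p u = max_affine B u"
    using exp_loss_max_affine unfolding prob_simplex_def by blast
  show ?thesis
  proof (cases "U = {}")
    case True
    then have "U = inequality_set {(0, -1)}" by (simp add: inequality_set_def)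
    then show ?thesis by blast
  next
    case False
    then obtain u0 where "u0 \<in> U" by blast
    let ?m = "max_affine B u0"
    have "U = {u. max_affine B u \<le> ?m}"
      using \<open>u0 \<in> U\<close> unfolding U elicited_def E by (auto intro: order_trans)
    also have "\<dots> = inequality_set ((\<lambda>(a, b). (a, ?m - b)) ` B)"
      using \<open>finite B\<close> \<open>B \<noteq> {}\<close> by (auto simp: max_affine_le_iff inequality_set_def)
    finally show ?thesis using \<open>finite B\<close> by blast
  qed
qed

end

lemma polyhedral_loss_imp_max_affine_loss:
  assumes "polyhedral_loss L"
  obtains A where "max_affine_loss L A"
proof -
  have "\<forall>y. \<exists>B. finite B \<and> B \<noteq> {} \<and> (\<forall>u. L u y = max_affine B u)"
    using assms unfolding polyhedral_loss_def max_affine_def by blast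
  then obtain A where "\<And>y. finite (A y) \<and> A y \<noteq> {} \<and> (\<forall>u. L u y = max_affine (A y) u)"
    by metis
  then have "max_affine_loss L A" by unfold_locales auto
  with that show ?thesis .
qed

lemma link_envelope_nonempty_at_common_point:
  assumes "indirectly_elicits L \<gamma>"
    and common: "\<And>U. U \<in> opt_sets L \<Longrightarrow> \<exists>v \<in> U. infnorm (v - u) < \<epsilon> \<Longrightarrow> w \<in> U"
  shows "link_envelope L \<gamma> \<epsilon> u \<noteq> {}"
proof -
  obtain r where r: "elicited_level L w \<subseteq> level_set \<gamma> r"
    using assms(1) unfolding indirectly_elicits_def by blast
  have "r \<in> link_envelope L \<gamma> \<epsilon> u"
    using common r by (fastforce simp: link_envelope_def reports_for_def cell_def elicited_level_def)
  then show ?thesis by blast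
qed

theorem proposition8:
  fixes L :: "real^'d \<Rightarrow> 'y::finite \<Rightarrow> real"
    and \<gamma> :: "('y \<Rightarrow> real) \<Rightarrow> 'r set"
  assumes "polyhedral_loss L"
    and "finite_property \<gamma>"
    and "indirectly_elicits L \<gamma>"
  shows "\<exists>\<epsilon>0>0. \<forall>\<epsilon>. 0 < \<epsilon> \<and> \<epsilon> \<le> \<epsilon>0 \<longrightarrow> (\<forall>u. link_envelope L \<gamma> \<epsilon> u \<noteq> {})"
proof -
  obtain A where "max_affine_loss L A"
    using assms(1) by (rule polyhedral_loss_imp_max_affine_loss)
  then interpret max_affine_loss L A .
  obtain \<epsilon>0 where "0 < \<epsilon>0"
    and common: "\<And>u. \<exists>w. \<forall>U \<in> opt_sets L. (\<exists>v \<in> U. infnorm (v - u) < \<epsilon>0) \<longrightarrow> w \<in> U"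
    using finite_polyhedra_common_point_nearby[OF finite_opt_sets opt_sets_polyhedral] by blast
  have "link_envelope L \<gamma> \<epsilon> u \<noteq> {}" if "\<epsilon> \<le> \<epsilon>0" for \<epsilon> u
  proof -
    obtain w where "\<forall>U \<in> opt_sets L. (\<exists>v \<in> U. infnorm (v - u) < \<epsilon>0) \<longrightarrow> w \<in> U"
      using common by blast
    with \<open>\<epsilon> \<le> \<epsilon>0\<close> show ?thesis
      by (intro link_envelope_nonempty_at_common_point[OF assms(3)]) force
  qed
  with \<open>0 < \<epsilon>0\<close> show ?thesis by blast
qed

end
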